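(* Fix $\lambda>0$. The function $\mathcal{L}(\cdot,\lambda)$ defined in the context is coercive on $\mathcal{K}$, in the sense that $\mathcal{L}(\mathbf{K},\lambda)\to\infty$ as $\mathbf{K}\to\partial\mathcal{K}$, where $\partial\mathcal{K}$ denotes the boundary of $\mathcal{K}$.
   Context: Consider the linear system $\mathbf{x}_{k+1}=\mathbf{A}\mathbf{x}_k+\mathbf{B}\mathbf{u}_k+\mathbf{w}_k$ with $\mathbf{x}_k\in\mathbb{R}^n$, $\mathbf{u}_k\in\mathbb{R}^p$, $(\mathbf{A},\mathbf{B})$ stabilizable, and i.i.d. noise $\mathbf{w}_k\sim\mathcal{N}(0,\Sigma_w)$. Let $\mathbf{Q}\in\mathbb{R}^{n\times n}$, $\mathbf{R}\in\mathbb{R}^{p\times p}$ be positive definite, $(\mathbf{A},\mathbf{Q}^{1/2})$ detectable, $\epsilon>0$, $\delta>0$, $\mathbf{q}\in\mathbb{R}^n$. Policies are $\mathbf{u}_k=-\mathbf{K}\mathbf{x}_k+\sigma_k$ with $\sigma_k\sim\mathcal{N}(0,\Sigma_\sigma)$ i.i.d., $\Sigma_\sigma$ a fixed covariance matrix, $\mathbf{K}\in\mathbb{R}^{p\times n}$. Let $\Sigma_{\bar w}=\Sigma_w+\mathbf{B}\Sigma_\sigma\mathbf{B}^T$ and $\mathcal{K}=\{\mathbf{K}:\rho(\mathbf{A}-\mathbf{B}\mathbf{K})<1\}$ ($\rho$ = spectral radius). For $\mathbf{K}\in\mathcal{K}$, let $\Sigma_K$ and $\mathbf{P}_K$ be the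 unique solutions of $\Sigma_K=\Sigma_{\bar w}+(\mathbf{A}-\mathbf{B}\mathbf{K})\Sigma_K(\mathbf{A}-\mathbf{B}\mathbf{K})^T$ and $\mathbf{P}_K=\mathbf{Q}+\mathbf{K}^T\mathbf{R}\mathbf{K}+(\mathbf{A}-\mathbf{B}\mathbf{K})^T\mathbf{P}_K(\mathbf{A}-\mathbf{B}\mathbf{K})$. Define $J(\mathbf{K})=\mathrm{tr}((\mathbf{Q}+\mathbf{K}^T\mathbf{R}\mathbf{K})\Sigma_K+\mathbf{R}\Sigma_\sigma)=\mathrm{tr}(\mathbf{P}_K\Sigma_{\bar w}+\mathbf{R}\Sigma_\sigma)$ (the infinite-horizon average expected cost $\mathbf{x}^T\mathbf{Q}\mathbf{x}+\mathbf{u}^T\mathbf{R}\mathbf{u}$), and $J_c(\mathbf{K})=\mathrm{E}[Q(a(\mathbf{x},\mathbf{K}))]$, the expectation over the stationary (ergodic) state distribution $\mathbf{x}\sim\mathcal{N}(0,\Sigma_K)$ of the closed loop, where $Q(a)=\frac{1}{\sqrt{2\pi}}\int_a^\infty e^{-z^2/2}dz$ and $a(\mathbf{x},\mathbf{K})=\frac{\epsilon-\mathbf{q}^T(\mathbf{A}-\mathbf{B}\mathbf{K})\mathbf{x}}{\sqrt{\mathbf{q}^T\Sigma_{\bar w}\mathbf{q}}}$ ($J_c$ is the long-run average probability that $\mathbf{q}^T\mathbf{x}_{k+1}\ge\epsilon$ given the past). The Lagrangian is $\mathcal{L}(\mathbf{K},\lambda)=J(\mathbf{K})+\lambda(J_c(\mathbf{K})-\delta)$.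 *)

theory Defs
  imports "HOL-Analysis.Analysis"
begin

definition spectral_radius :: "real^'n^'n \<Rightarrow> real" where
  "spectral_radius M =
     Sup (cmod ` {z::complex. det ((mat z :: complex^'n^'n) - (\<chi> i j. complex_of_real (M$i$j))) = 0})"

definition sym_mat :: "real^'n^'n \<Rightarrow> bool" where
  "sym_mat M \<longleftrightarrow> transpose M = M"

definition pos_def :: "real^'n^'n \<Rightarrow> bool" where
  "pos_def M \<longleftrightarrow> sym_mat M \<and> (\<forall>x. x \<noteq> 0 \<longrightarrow> x \<bullet> (M *v x) > 0)"

definition pos_semidef :: "real^'n^'n \<Rightarrow> bool" where
  "pos_semidef M \<longleftrightarrow> sym_mat M \<and> (\<forall>x. x \<bullet> (M *v x) \<ge> 0)"

definition psd_sqrt :: "real^'n^'n \<Rightarrow> real^'n^'n" where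
  "psd_sqrt M = (THE S. pos_semidef S \<and> S ** S = M)"

definition stabilizable :: "real^'n^'n \<Rightarrow> real^'p^'n \<Rightarrow> bool" where
  "stabilizable A B \<longleftrightarrow> (\<exists>K::real^'n^'p. spectral_radius (A - B ** K) < 1)"

definition detectable :: "real^'n^'n \<Rightarrow> real^'n^'m \<Rightarrow> bool" where
  "detectable A C \<longleftrightarrow> (\<exists>L::real^'m^'n. spectral_radius (A - L ** C) < 1)"

definition stab_set :: "real^'n^'n \<Rightarrow> real^'p^'n \<Rightarrow> (real^'n^'p) set" where
  "stab_set A B = {K. spectral_radius (A - B ** K) < 1}"

definition Sigma_bar :: "real^'n^'n \<Rightarrow> real^'p^'n \<Rightarrow> real^'p^'p \<Rightarrow> real^'n^'n" where
  "Sigma_bar Sw B Ss = Sw + B ** Ss ** transpose B"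

definition Sigma_K :: "real^'n^'n \<Rightarrow> real^'p^'n \<Rightarrow> real^'n^'n \<Rightarrow> real^'p^'p
    \<Rightarrow> real^'n^'p \<Rightarrow> real^'n^'n" where
  "Sigma_K A B Sw Ss K = (THE S. S = Sigma_bar Sw B Ss + (A - B ** K) ** S ** transpose (A - B ** K))"

definition P_K :: "real^'n^'n \<Rightarrow> real^'p^'n \<Rightarrow> real^'n^'n \<Rightarrow> real^'p^'p
    \<Rightarrow> real^'n^'p \<Rightarrow> real^'n^'n" where
  "P_K A B Q R K = (THE P. P = Q + transpose K ** R ** K + transpose (A - B ** K) ** P ** (A - B ** K))"

definition J_cost :: "real^'n^'n \<Rightarrow> real^'p^'n \<Rightarrow> real^'n^'n \<Rightarrow> real^'p^'p
    \<Rightarrow> real^'n^'n \<Rightarrow> real^'p^'p \<Rightarrow> real^'n^'p \<Rightarrow> real" where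
  "J_cost A B Q R Sw Ss K =
     trace ((Q + transpose K ** R ** K) ** Sigma_K A B Sw Ss K) + trace (R ** Ss)"

definition Qfun :: "real \<Rightarrow> real" where
  "Qfun a = (LINT z|lborel. indicator {a..} z * exp (- (z^2) / 2)) / sqrt (2 * pi)"

(* Expectation of f under N(0, Sigma): x = L z with L L^T = Sigma, z standard normal in R^n *)
definition gauss_expect :: "real^'n^'n \<Rightarrow> (real^'n \<Rightarrow> real) \<Rightarrow> real" where
  "gauss_expect Sig f =
     (let L = (SOME L::real^'n^'n. L ** transpose L = Sig) in
      LINT z|lborel. (\<Prod>i\<in>UNIV. exp (- ((z$i)^2) / 2) / sqrt (2 * pi)) * f (L *v z))"

definition a_fun :: "real^'n^'n \<Rightarrow> real^'p^'n \<Rightarrow> real^'n^'n \<Rightarrow> real^'p^'p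
    \<Rightarrow> real \<Rightarrow> real^'n \<Rightarrow> real^'n \<Rightarrow> real^'n^'p \<Rightarrow> real" where
  "a_fun A B Sw Ss eps q x K =
     (eps - q \<bullet> ((A - B ** K) *v x)) / sqrt (q \<bullet> (Sigma_bar Sw B Ss *v q))"

definition Jc_cost :: "real^'n^'n \<Rightarrow> real^'p^'n \<Rightarrow> real^'n^'n \<Rightarrow> real^'p^'p
    \<Rightarrow> real \<Rightarrow> real^'n \<Rightarrow> real^'n^'p \<Rightarrow> real" where
  "Jc_cost A B Sw Ss eps q K =
     gauss_expect (Sigma_K A B Sw Ss K) (\<lambda>x. Qfun (a_fun A B Sw Ss eps q x K))"

definition Lagr :: "real^'n^'n \<Rightarrow> real^'p^'n \<Rightarrow> real^'n^'n \<Rightarrow> real^'p^'p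
    \<Rightarrow> real^'n^'n \<Rightarrow> real^'p^'p \<Rightarrow> real \<Rightarrow> real \<Rightarrow> real^'n \<Rightarrow> real^'n^'p \<Rightarrow> real \<Rightarrow> real" where
  "Lagr A B Q R Sw Ss eps delta q K lam =
     J_cost A B Q R Sw Ss K + lam * (Jc_cost A B Sw Ss eps q K - delta)"

end

theory Submission
  imports Defs "Jordan_Normal_Form.Spectral_Radius"
begin

(*
  For a stabilizing gain K the stationary covariance Sigma_K is the Lyapunov series
  sum_k M^k Sigma_bar (M^T)^k with M = A - B K. Positive definiteness of Q and Sigma_w gives
  a constant c > 0 with J(K) >= c * sum_{k<N} |M^k|^2 + tr(R Sigma_sigma) for every N
  (Frobenius norm), and J_c >= 0 as the average of a probability. A matrix has spectral
  radius < 1 iff sum_k |M^k|^2 converges. A boundary gain K0 is not stabilizing, the set of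
  stabilizing gains being open, so these partial sums are unbounded at K0; each of them is
  continuous in K, hence near K0 they, and with them the Lagrangian, exceed every bound.
*)

no_notation vec_index (infixl "$" 100)
no_notation scalar_prod (infix "\<bullet>" 70)
hide_const (open) Matrix.mat Matrix.vec Matrix.row Matrix.col Determinant.det
  Spectral_Radius.spectral_radius

lemma matrix_add_rdistrib: "((A::'a::semiring_1^'m^'n) + B) ** C = A ** C + B ** C"
  by (simp add: matrix_matrix_mult_def Finite_Cartesian_Product.vec_eq_iff sum.distrib
      algebra_simps)

lemma matrix_diff_rdistrib: "((A::'a::ring_1^'m^'n) - B) ** C = A ** C - B ** C"
  by (simp add: matrix_matrix_mult_def Finite_Cartesian_Product.vec_eq_iff sum_subtractf
      algebra_simps)

lemma matrix_diff_ldistrib: "(C::'a::ring_1^'m^'n) ** (A - B) = C ** A - C ** B"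
  by (simp add: matrix_matrix_mult_def Finite_Cartesian_Product.vec_eq_iff sum_subtractf
      algebra_simps)

lemma transpose_matrix_add: "transpose (A + B) = transpose A + transpose (B::'a::semiring_1^'m^'n)"
  by (simp add: transpose_def Finite_Cartesian_Product.vec_eq_iff)

lemma transpose_matrix_diff: "transpose (A - B) = transpose A - transpose (B::'a::ring_1^'m^'n)"
  by (simp add: transpose_def Finite_Cartesian_Product.vec_eq_iff)

lemma inner_matrix_vector_transpose:
  "(x::real^'n) \<bullet> ((A::real^'m^'n) *v y) = (transpose A *v x) \<bullet> y"
  by (simp add: dot_lmul_matrix)

lemma matrix_entry_eq_inner_axis: "(S::real^'n^'m) $ a $ b = axis a 1 \<bullet> (S *v axis b 1)"
  by (simp add: inner_axis' matrix_vector_mult_basis column_def)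

lemma trace_scaleR: "trace (c *\<^sub>R (A::real^'n^'n)) = c * trace A"
  by (simp add: trace_def sum_distrib_left)

lemma trace_congruence:
  "trace (P ** X ** transpose P) = (\<Sum>i\<in>UNIV. P $ i \<bullet> (X *v P $ i))" for P :: "real^'m^'n"
proof -
  have "trace (P ** X ** transpose P)
      = (\<Sum>i\<in>UNIV. \<Sum>j\<in>UNIV. \<Sum>l\<in>UNIV. P $ i $ l * X $ l $ j * P $ i $ j)"
    by (simp add: trace_def matrix_matrix_mult_def transpose_def sum_distrib_right)
  also have "\<dots> = (\<Sum>i\<in>UNIV. \<Sum>l\<in>UNIV. \<Sum>j\<in>UNIV. P $ i $ l * X $ l $ j * P $ i $ j)"
    by (rule sum.cong[OF refl], rule sum.swap)
  also have "\<dots> = (\<Sum>i\<in>UNIV. P $ i \<bullet> (X *v P $ i))"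
    by (simp add: inner_vec_def matrix_vector_mult_def sum_distrib_left mult.assoc)
  finally show ?thesis .
qed

lemma trace_mult_outer: "trace (P ** (\<chi> a b. u $ a * u $ b)) = u \<bullet> (P *v u)"
  by (simp add: trace_def matrix_matrix_mult_def inner_vec_def matrix_vector_mult_def
      sum_distrib_left mult_ac)

lemma bounded_linear_congruence:
  "bounded_linear (\<lambda>Y::real^'m^'m. (P::real^'m^'n) ** Y ** transpose P)"
  unfolding linear_conv_bounded_linear[symmetric]
  by (rule linearI) (simp_all add: matrix_add_ldistrib matrix_add_rdistrib matrix_scalar_ac
      scalar_matrix_assoc)

lemma bounded_linear_transpose: "bounded_linear (transpose :: real^'m^'n \<Rightarrow> real^'n^'m)"
  unfolding linear_conv_bounded_linear[symmetric]
  by (rule linearI) (simp_all add: transpose_matrix_add transpose_scalar)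

lemma bounded_linear_trace: "bounded_linear (trace :: real^'n^'n \<Rightarrow> real)"
  unfolding linear_conv_bounded_linear[symmetric]
  by (rule linearI) (simp_all add: trace_add trace_def sum_distrib_left)

lemma bounded_linear_quadratic_form: "bounded_linear (\<lambda>Y::real^'n^'n. x \<bullet> (Y *v x))"
  unfolding linear_conv_bounded_linear[symmetric]
  by (rule linearI) (simp_all add: matrix_vector_mult_add_rdistrib inner_add_right
      scaleR_matrix_vector_assoc[symmetric])

lemma continuous_on_matrix_mult [continuous_intros]:
  fixes f :: "'a::topological_space \<Rightarrow> real^'m^'n" and g :: "'a \<Rightarrow> real^'k^'m"
  assumes "continuous_on S f" and "continuous_on S g"
  shows "continuous_on S (\<lambda>x. f x ** g x)"
  unfolding matrix_matrix_mult_def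
  by (intro continuous_on_vec_lambda continuous_intros assms)

section \<open>Matrix powers and the Frobenius norm\<close>

primrec matpow :: "'a::semiring_1^'n^'n \<Rightarrow> nat \<Rightarrow> 'a^'n^'n" where
  "matpow M 0 = mat 1"
| "matpow M (Suc k) = matpow M k ** M"

lemma matpow_commute: "matpow M k ** M = M ** matpow M k"
  by (induction k) (simp_all flip: matrix_mul_assoc)

lemma matpow_scaleR: "matpow (c *\<^sub>R (M::real^'n^'n)) k = c ^ k *\<^sub>R matpow M k"
  by (induction k) (simp_all add: matrix_scalar_ac scalar_matrix_assoc)

lemma map_matrix_matpow:
  "map_matrix of_real (matpow (M::real^'n^'n) k) = matpow (map_matrix of_real M) k"
  by (induction k) (simp_all add: map_matrix_def matrix_matrix_mult_def
      Finite_Cartesian_Product.mat_def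
      Finite_Cartesian_Product.vec_eq_iff)

lemma matpow_eigenvector:
  assumes "(M::'a::field^'n^'n) *v v = z *s v"
  shows "matpow M k *v v = z ^ k *s v"
  by (induction k)
    (simp_all add: assms vector_scalar_commute mult.commute flip: matrix_vector_mul_assoc)

lemma continuous_on_matpow [continuous_intros]:
  fixes f :: "'a::topological_space \<Rightarrow> real^'n^'n"
  assumes "continuous_on S f"
  shows "continuous_on S (\<lambda>x. matpow (f x) k)"
  by (induction k) (simp_all add: continuous_on_matrix_mult assms)

lemma norm_matrix_sq:
  "norm (A::real^'m^'n) ^ 2 = (\<Sum>i\<in>UNIV. \<Sum>j\<in>UNIV. (A $ i $ j) ^ 2)"
  unfolding power2_norm_eq_inner by (simp add: inner_vec_def power2_eq_square)

lemma norm_sq_eq_sum_rows: "norm (A::real^'m^'n) ^ 2 = (\<Sum>i\<in>UNIV. norm (A $ i) ^ 2)"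
  by (simp add: power2_norm_eq_inner inner_vec_def)

lemma abs_matrix_entry_le_norm: "\<bar>(A::real^'m^'n) $ i $ j\<bar> \<le> norm A"
  by (rule order_trans[OF component_le_norm_cart Finite_Cartesian_Product.norm_nth_le])

lemma norm_matrix_le_sum_abs:
  "norm (A::real^'m^'n) \<le> (\<Sum>i\<in>UNIV. \<Sum>j\<in>UNIV. \<bar>A $ i $ j\<bar>)"
proof -
  have "norm A \<le> (\<Sum>i\<in>UNIV. norm (A $ i))"
    unfolding norm_vec_def by (rule L2_set_le_sum) simp
  also have "\<dots> \<le> (\<Sum>i\<in>UNIV. \<Sum>j\<in>UNIV. \<bar>A $ i $ j\<bar>)"
    by (intro sum_mono norm_le_l1_cart)
  finally show ?thesis .
qed

lemma row_sum_abs_le_norm: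
  "(\<Sum>j\<in>UNIV. \<bar>(A::real^'m^'n) $ i $ j\<bar>) \<le> CARD('m) * norm A"
  using sum_bounded_above[of UNIV "\<lambda>j. \<bar>A $ i $ j\<bar>" "norm A", OF
      abs_matrix_entry_le_norm]
  by simp

lemma norm_transpose: "norm (transpose (A::real^'m^'n)) = norm A"
proof -
  have "norm (transpose A) ^ 2 = (\<Sum>i\<in>UNIV. \<Sum>j\<in>UNIV. (A $ j $ i) ^ 2)"
    by (simp add: norm_matrix_sq transpose_def)
  also have "\<dots> = norm A ^ 2"
    unfolding norm_matrix_sq by (rule sum.swap)
  finally show ?thesis by (simp add: power2_eq_iff_nonneg)
qed

lemma norm_matrix_mult_le: "norm ((A::real^'m^'n) ** (B::real^'k^'m)) \<le> norm A * norm B"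
proof -
  have entry: "(A ** B) $ i $ j = (A $ i) \<bullet> (transpose B $ j)" for i j
    by (simp add: matrix_matrix_mult_def transpose_def inner_vec_def)
  have "norm (A ** B) ^ 2 = (\<Sum>i\<in>UNIV. \<Sum>j\<in>UNIV. ((A $ i) \<bullet> (transpose B $ j)) ^ 2)"
    by (simp add: norm_matrix_sq entry)
  also have "\<dots> \<le> (\<Sum>i\<in>UNIV. \<Sum>j\<in>UNIV. norm (A $ i) ^ 2 * norm (transpose B $ j) ^ 2)"
    using Cauchy_Schwarz_ineq by (intro sum_mono) (simp add: power2_norm_eq_inner)
  also have "\<dots> = (\<Sum>i\<in>UNIV. norm (A $ i) ^ 2) * (\<Sum>j\<in>UNIV. norm (transpose B $ j) ^ 2)"
    by (simp add: sum_product)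
  also have "\<dots> = (norm A * norm B) ^ 2"
    by (simp only: norm_sq_eq_sum_rows[symmetric] norm_transpose power_mult_distrib)
  finally show ?thesis
    by (rule power2_le_imp_le) (intro mult_nonneg_nonneg norm_ge_zero)
qed

section \<open>Positive semidefinite matrices\<close>

lemma pos_def_imp_pos_semidef:
  assumes "pos_def M"
  shows "pos_semidef M"
proof -
  have "x \<bullet> (M *v x) \<ge> 0" for x
    using assms by (cases "x = 0") (auto simp: pos_def_def less_imp_le)
  then show ?thesis
    using assms by (simp add: pos_def_def pos_semidef_def)
qed

lemma pos_semidef_add:
  "pos_semidef A \<Longrightarrow> pos_semidef B \<Longrightarrow> pos_semidef (A + B)"
  by (simp add: pos_semidef_def sym_mat_def transpose_matrix_add matrix_vector_mult_add_rdistrib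
      inner_add_right)

lemma quadratic_lower_bound_add_pos_semidef:
  assumes "\<And>x. c * (x \<bullet> x) \<le> x \<bullet> (P *v x)" and "pos_semidef S"
  shows "c * (x \<bullet> x) \<le> x \<bullet> ((P + S) *v x)"
  using assms(1)[of x] assms(2) by (simp add: pos_semidef_def matrix_vector_mult_add_rdistrib
      inner_add_right
      add_increasing2)

lemma quadratic_form_congruence:
  "x \<bullet> ((P ** S ** transpose P) *v x) = (transpose P *v x) \<bullet> (S *v (transpose P *v x))"
  for P :: "real^'m^'n"
  by (simp add: inner_matrix_vector_transpose flip: matrix_vector_mul_assoc)

lemma pos_semidef_congruence:
  fixes P :: "real^'m^'n"
  assumes "pos_semidef S"
  shows "pos_semidef (P ** S ** transpose P)"
  using assms
  by (simp add: pos_semidef_def sym_mat_def quadratic_form_congruence matrix_transpose_mul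
      matrix_mul_assoc)

lemma pos_def_quadratic_lower_bound:
  assumes "pos_def (M::real^'n^'n)"
  obtains c where "c > 0" "\<And>x. c * (x \<bullet> x) \<le> x \<bullet> (M *v x)"
proof -
  let ?q = "\<lambda>x. x \<bullet> (M *v x)"
  have "continuous_on (sphere 0 1) ?q"
    by (intro continuous_intros linear_continuous_on matrix_vector_mul_bounded_linear)
  then obtain x0 where x0: "x0 \<in> sphere 0 1" and min: "\<And>y. y \<in> sphere 0 1 \<Longrightarrow> ?q x0 \<le> ?q y"
    using continuous_attains_inf[OF compact_sphere, of 0 1 ?q] by auto
  have "?q x0 * (x \<bullet> x) \<le> ?q x" for x
  proof (cases "x = 0")
    case False
    then have "?q x0 \<le> ?q ((1 / norm x) *\<^sub>R x)"
      by (intro min) simp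
    also have "\<dots> = ?q x / (x \<bullet> x)"
      by (simp add: scaleR_matrix_vector_assoc[symmetric] matrix_scaleR_vector_ac
          power2_norm_eq_inner[symmetric] power2_eq_square field_simps)
    finally show ?thesis
      using False by (simp add: pos_le_divide_eq)
  qed simp
  moreover have "x0 \<noteq> 0"
    using x0 by auto
  then have "?q x0 > 0"
    using assms by (simp add: pos_def_def)
  ultimately show ?thesis
    using that by blast
qed

lemma quadratic_nonneg_discriminant:
  fixes a b c :: real
  assumes nonneg: "\<And>t. 0 \<le> a + 2 * t * b + t ^ 2 * c" and "0 \<le> c"
  shows "b ^ 2 \<le> a * c"
proof (cases "c = 0")
  case True
  have "b = 0"
  proof (rule ccontr)
    assume "b \<noteq> 0"
    have "0 \<le> a + 2 * (- (a + 1) / (2 * b)) * b"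
      using nonneg[of "- (a + 1) / (2 * b)"] True by simp
    also have "\<dots> = -1"
      using \<open>b \<noteq> 0\<close> by (simp add: field_simps)
    finally show False
      by simp
  qed
  then show ?thesis
    using True by simp
next
  case False
  then have "c > 0"
    using \<open>0 \<le> c\<close> by simp
  have "0 \<le> a + 2 * (- b / c) * b + (- b / c) ^ 2 * c"
    by (rule nonneg)
  also have "\<dots> = a - b ^ 2 / c"
    using \<open>c > 0\<close> by (simp add: field_simps power2_eq_square)
  finally show ?thesis
    using \<open>c > 0\<close> by (simp add: field_simps)
qed

lemma pos_semidef_symmetric_form:
  assumes "pos_semidef S"
  shows "y \<bullet> (S *v x) = x \<bullet> (S *v (y::real^'n))"
proof -
  have "y \<bullet> (S *v x) = (transpose S *v y) \<bullet> x"
    by (rule inner_matrix_vector_transpose)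
  also have "\<dots> = x \<bullet> (S *v y)"
    using assms by (simp add: pos_semidef_def sym_mat_def inner_commute)
  finally show ?thesis .
qed

lemma pos_semidef_cauchy_schwarz:
  assumes "pos_semidef S"
  shows "(x \<bullet> (S *v y)) ^ 2 \<le> (x \<bullet> (S *v x)) * (y \<bullet> (S *v (y::real^'n)))"
proof (rule quadratic_nonneg_discriminant)
  fix t
  have "0 \<le> (x + t *\<^sub>R y) \<bullet> (S *v (x + t *\<^sub>R y))"
    using assms by (simp add: pos_semidef_def)
  also have "\<dots> = x \<bullet> (S *v x) + 2 * t * (x \<bullet> (S *v y)) + t ^ 2 * (y \<bullet> (S *v y))"
    using pos_semidef_symmetric_form[OF assms, of y x]
    by (simp add: matrix_vector_right_distrib inner_add_left inner_add_right matrix_scaleR_vector_ac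
        scaleR_matrix_vector_assoc[symmetric] power2_eq_square algebra_simps)
  finally show "0 \<le> x \<bullet> (S *v x) + 2 * t * (x \<bullet> (S *v y)) + t ^ 2 * (y \<bullet> (S *v y))" .
next
  show "0 \<le> y \<bullet> (S *v y)"
    using assms by (simp add: pos_semidef_def)
qed

lemma pos_semidef_entry_sym:
  assumes "pos_semidef S"
  shows "S $ a $ b = S $ b $ a"
proof -
  have "transpose S $ b $ a = S $ b $ a"
    using assms by (simp add: pos_semidef_def sym_mat_def)
  then show ?thesis
    by (simp add: transpose_def)
qed

lemma pos_semidef_zero_diagonal:
  assumes "pos_semidef S" and "\<And>i. S $ i $ i = 0"
  shows "S = 0"
proof -
  have "(S $ a $ b) ^ 2 \<le> S $ a $ a * S $ b $ b" for a b
    using pos_semidef_cauchy_schwarz[OF assms(1), of "axis a 1" "axis b 1"]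
    by (simp flip: matrix_entry_eq_inner_axis)
  then show ?thesis
    using assms(2) by (simp add: Finite_Cartesian_Product.vec_eq_iff)
qed

lemma pos_semidef_diff_rank_one:
  fixes S :: "real^'n^'n"
  assumes S: "pos_semidef S" and d: "S $ i $ i > 0"
  shows "pos_semidef (S - (1 / S $ i $ i) *\<^sub>R (\<chi> a b. S $ a $ i * S $ b $ i))"
proof -
  let ?R = "(\<chi> a b. S $ a $ i * S $ b $ i) :: real^'n^'n"
  note symS = pos_semidef_entry_sym[OF S]
  have "x \<bullet> (?R *v x) = (x \<bullet> (S *v axis i 1)) ^ 2" for x
    unfolding matrix_vector_mult_basis
    by (simp add: inner_vec_def matrix_vector_mult_def column_def power2_eq_square sum_product
        sum_distrib_left mult_ac)
  moreover have "(x \<bullet> (S *v axis i 1)) ^ 2 \<le> (x \<bullet> (S *v x)) * S $ i $ i" for x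
    using pos_semidef_cauchy_schwarz[OF S, of x "axis i 1"] by (simp flip:
        matrix_entry_eq_inner_axis)
  ultimately have "x \<bullet> ((S - (1 / S $ i $ i) *\<^sub>R ?R) *v x) \<ge> 0" for x
    using d by (simp add: matrix_vector_mult_diff_rdistrib inner_diff_right field_simps
        scaleR_matrix_vector_assoc[symmetric])
  moreover have "transpose (S - (1 / S $ i $ i) *\<^sub>R ?R) = S - (1 / S $ i $ i) *\<^sub>R ?R"
    by (simp add: transpose_def Finite_Cartesian_Product.vec_eq_iff symS mult.commute)
  ultimately show ?thesis
    by (simp add: pos_semidef_def sym_mat_def)
qed

lemma nonzero_rows_diff_rank_one:
  fixes S :: "real^'n^'n"
  assumes S: "pos_semidef S" and d: "S $ i $ i > 0"
  defines "S' \<equiv> S - (1 / S $ i $ i) *\<^sub>R (\<chi> a b. S $ a $ i * S $ b $ i)"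
  shows "{j. S' $ j \<noteq> 0} \<subset> {j. S $ j \<noteq> 0}"
proof -
  have "S' $ i $ b = 0" for b
    using d pos_semidef_entry_sym[OF S, of i b] by (simp add: S'_def)
  then have "S' $ i = 0"
    by (simp add: Finite_Cartesian_Product.vec_eq_iff)
  moreover have "S' $ j = 0" if "S $ j = 0" for j
    using that by (simp add: S'_def Finite_Cartesian_Product.vec_eq_iff)
  moreover have "S $ i \<noteq> 0"
    using d by (metis zero_index less_irrefl)
  ultimately show ?thesis
    by blast
qed

lemma trace_mult_pos_semidef_nonneg:
  fixes P S :: "real^'n^'n"
  assumes P: "pos_semidef P" and S: "pos_semidef S"
  shows "0 \<le> trace (P ** S)"
  using S
proof (induction "card {j. S $ j \<noteq> 0}" arbitrary: S rule: less_induct)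
  case less
  show ?case
  proof (cases "\<forall>i. S $ i $ i = 0")
    case True
    then show ?thesis
      using pos_semidef_zero_diagonal[OF less.prems] by (simp add: trace_def)
  next
    case False
    then obtain i where "S $ i $ i \<noteq> 0"
      by blast
    moreover have "S $ i $ i \<ge> 0"
      using less.prems by (simp add: pos_semidef_def matrix_entry_eq_inner_axis)
    ultimately have d: "S $ i $ i > 0"
      by simp
    \<comment> \<open>Removing the rank-one part of S through a positive diagonal entry zeroes another row.\<close>
    define R where "R = ((\<chi> a b. S $ a $ i * S $ b $ i) :: real^'n^'n)"
    define S' where "S' = S - (1 / S $ i $ i) *\<^sub>R R"
    have "pos_semidef S'"
      unfolding S'_def R_def by (rule pos_semidef_diff_rank_one[OF less.prems d])
    moreover have "{j. S' $ j \<noteq> 0} \<subset> {j. S $ j \<noteq> 0}"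
      unfolding S'_def R_def by (rule nonzero_rows_diff_rank_one[OF less.prems d])
    ultimately have "0 \<le> trace (P ** S')"
      by (intro less.hyps psubset_card_mono) simp_all
    moreover have "trace (P ** S) = trace (P ** S') + (1 / S $ i $ i) * trace (P ** R)"
      by (simp add: S'_def matrix_diff_ldistrib matrix_scalar_ac trace_sub trace_scaleR
          flip: scalar_matrix_assoc)
    moreover have "trace (P ** R) = column i S \<bullet> (P *v column i S)"
      unfolding R_def column_def by (rule trace_mult_outer[where u = "\<chi> a. S $ a $ i",
          simplified])
    then have "0 \<le> trace (P ** R)"
      using P by (simp add: pos_semidef_def)
    ultimately show ?thesis
      using d by simp
  qed
qed

lemma trace_mult_ge:
  fixes W S :: "real^'n^'n"
  assumes "transpose W = W" and W: "\<And>x. c * (x \<bullet> x) \<le> x \<bullet> (W *v x)" and "pos_semidef S"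
  shows "c * trace S \<le> trace (W ** S)"
proof -
  have "x \<bullet> ((W - c *\<^sub>R mat 1) *v x) = x \<bullet> (W *v x) - c * (x \<bullet> x)" for x
    by (simp add: matrix_vector_mult_diff_rdistrib inner_diff_right flip:
        scaleR_matrix_vector_assoc)
  then have "pos_semidef (W - c *\<^sub>R mat 1)"
    using assms(1) W by (simp add: pos_semidef_def sym_mat_def transpose_matrix_diff
        transpose_scalar)
  then have "0 \<le> trace ((W - c *\<^sub>R mat 1) ** S)"
    using assms(3) by (rule trace_mult_pos_semidef_nonneg)
  also have "\<dots> = trace (W ** S) - c * trace S"
    by (simp add: matrix_diff_rdistrib trace_sub trace_scaleR flip: scalar_matrix_assoc)
  finally show ?thesis
    by simp
qed

section \<open>Eigenvalues and the spectral radius\<close>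

definition eigenvalues :: "real^'n^'n \<Rightarrow> complex set" where
  "eigenvalues M = {z. det (mat z - map_matrix complex_of_real M) = 0}"

lemma spectral_radius_eq_Sup_eigenvalues: "spectral_radius M = Sup (cmod ` eigenvalues M)"
  by (simp add: Defs.spectral_radius_def eigenvalues_def map_matrix_def)

lemma mat_mult_vector: "(mat c :: 'a::comm_ring_1^'n^'n) *v v = c *s v"
  by (simp add: matrix_vector_mult_def Finite_Cartesian_Product.mat_def
      Finite_Cartesian_Product.vec_eq_iff if_distrib if_distribR cong: if_cong)

lemma eigenvalues_iff:
  "z \<in> eigenvalues M \<longleftrightarrow> (\<exists>v. v \<noteq> 0 \<and> map_matrix complex_of_real M *v v = z *s v)"
proof -
  let ?C = "mat z - map_matrix complex_of_real M"
  have lin: "Vector_Spaces.linear (*s) (*s) ((*v) ?C)"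
    by (rule matrix_vector_mul_linear_gen)
  have "z \<in> eigenvalues M \<longleftrightarrow> \<not> inj ((*v) ?C)"
    using det_nz_iff_inj_gen[OF lin] unfolding eigenvalues_def matrix_of_matrix_vector_mul by auto
  also have "\<dots> \<longleftrightarrow> (\<exists>v. v \<noteq> 0 \<and> ?C *v v = 0)"
    using vec.linear_inj_iff_eq_0[OF lin] by blast
  also have "\<dots> \<longleftrightarrow> (\<exists>v. v \<noteq> 0 \<and> map_matrix complex_of_real M *v v = z *s v)"
    by (auto simp: matrix_vector_mult_diff_rdistrib mat_mult_vector)
  finally show ?thesis .
qed

text \<open>
  Finiteness and nonemptiness of the spectrum, and boundedness of the powers of a matrix of
  spectral radius < 1, are taken from the Jordan normal form library; to_mat transfers a
  matrix to its matrix type along an enumeration of the index type.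
\<close>

definition to_idx :: "'n::finite \<Rightarrow> nat" where
  "to_idx = (SOME h. bij_betw h (UNIV :: 'n set) {0..<CARD('n)})"

definition from_idx :: "nat \<Rightarrow> 'n::finite" where
  "from_idx = inv_into UNIV to_idx"

lemma bij_to_idx: "bij_betw (to_idx :: 'n::finite \<Rightarrow> nat) UNIV {0..<CARD('n)}"
  unfolding to_idx_def using ex_bij_betw_finite_nat[of "UNIV :: 'n set"] by (rule someI_ex) simp

lemma to_idx_less [simp]: "to_idx (i::'n::finite) < CARD('n)"
  using bij_to_idx[where 'n='n] by (auto simp: bij_betw_def)

lemma from_idx_to_idx [simp]: "from_idx (to_idx (i::'n::finite)) = i"
  unfolding from_idx_def using bij_to_idx bij_betw_inv_into_left by fastforce

lemma to_idx_from_idx [simp]: "k < CARD('n) \<Longrightarrow> to_idx (from_idx k :: 'n::finite) = k"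
  unfolding from_idx_def using bij_to_idx[where 'n='n] bij_betw_inv_into_right by fastforce

lemma sum_from_idx: "(\<Sum>k<CARD('n). f (from_idx k :: 'n::finite)) = (\<Sum>i\<in>UNIV. f i)"
  using sum.reindex_bij_betw[OF bij_betw_inv_into[OF bij_to_idx], of f]
  by (simp add: from_idx_def atLeast0LessThan)

definition to_mat :: "'a^'n^'n \<Rightarrow> 'a mat" where
  "to_mat M = Matrix.mat CARD('n) CARD('n) (\<lambda>(i, j). M $ from_idx i $ from_idx j)"

definition to_vec :: "'a^'n \<Rightarrow> 'a Matrix.vec" where
  "to_vec v = Matrix.vec CARD('n) (\<lambda>i. v $ from_idx i)"

definition from_vec :: "'a Matrix.vec \<Rightarrow> 'a^'n::finite" where
  "from_vec w = (\<chi> i. vec_index w (to_idx i))"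

lemma to_mat_carrier [simp]: "to_mat (M::'a^'n^'n) \<in> carrier_mat CARD('n) CARD('n)"
  by (simp add: to_mat_def)

lemma to_mat_dim [simp]: "dim_row (to_mat (M::'a^'n^'n)) = CARD('n)" "dim_col (to_mat M) = CARD('n)"
  by (simp_all add: to_mat_def)

lemma to_mat_index [simp]: "to_mat M $$ (to_idx i, to_idx j) = M $ i $ j"
  by (simp add: to_mat_def)

lemma to_vec_carrier [simp]: "to_vec (v::'a^'n) \<in> carrier_vec CARD('n)"
  by (simp add: to_vec_def)

lemma from_vec_to_vec [simp]: "from_vec (to_vec v) = v"
  by (simp add: from_vec_def to_vec_def Finite_Cartesian_Product.vec_eq_iff)

lemma to_vec_from_vec:
  "w \<in> carrier_vec CARD('n) \<Longrightarrow> to_vec (from_vec w :: 'a^'n::finite) = w"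
  by (auto simp: from_vec_def to_vec_def)

lemma to_vec_eq_0_iff:
  "to_vec v = 0\<^sub>v CARD('n) \<longleftrightarrow> v = (0::'a::zero^'n::finite)"
proof
  assume "to_vec v = 0\<^sub>v CARD('n)"
  then have "from_vec (to_vec v) = (from_vec (0\<^sub>v CARD('n)) :: 'a^'n)" by simp
  then show "v = 0" by (simp add: from_vec_def to_vec_def Finite_Cartesian_Product.vec_eq_iff)
qed (auto simp: to_vec_def)

lemma to_vec_smult: "to_vec (c *s v) = c \<cdot>\<^sub>v to_vec v"
  by (auto simp: to_vec_def)

lemma to_mat_mult_vec: "to_mat (M::'a::comm_semiring_1^'n^'n) *\<^sub>v to_vec v = to_vec (M *v v)"
proof (rule eq_vecI)
  fix i assume "i < dim_vec (to_vec (M *v v))"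
  then have i: "i < CARD('n)" by (simp add: to_vec_def)
  have "vec_index (to_mat M *\<^sub>v to_vec v) i
      = (\<Sum>k<CARD('n). M $ from_idx i $ from_idx k * v $ from_idx k)"
    using i by (simp add: to_mat_def to_vec_def scalar_prod_def Matrix.row_def atLeast0LessThan)
  also have "\<dots> = (\<Sum>j\<in>UNIV. M $ from_idx i $ j * v $ j)"
    by (rule sum_from_idx)
  also have "\<dots> = vec_index (to_vec (M *v v)) i"
    using i by (simp add: to_vec_def matrix_vector_mult_def)
  finally show "vec_index (to_mat M *\<^sub>v to_vec v) i = vec_index (to_vec (M *v v)) i" .
qed (simp add: to_vec_def to_mat_def)

lemma to_mat_mult: "to_mat (M ** N) = to_mat M * to_mat (N::'a::comm_semiring_1^'n^'n)"
proof (rule eq_matI)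
  fix i j assume "i < dim_row (to_mat M * to_mat N)" "j < dim_col (to_mat M * to_mat N)"
  then have i: "i < CARD('n)" and j: "j < CARD('n)" by (auto simp: to_mat_def)
  have "(to_mat M * to_mat N) $$ (i, j)
      = (\<Sum>k<CARD('n). M $ from_idx i $ from_idx k * N $ from_idx k $ from_idx j)"
    using i j by (simp add: to_mat_def scalar_prod_def Matrix.row_def Matrix.col_def
        atLeast0LessThan)
  also have "\<dots> = (\<Sum>k\<in>UNIV. M $ from_idx i $ k * N $ k $ from_idx j)"
    by (rule sum_from_idx)
  also have "\<dots> = to_mat (M ** N) $$ (i, j)"
    using i j by (simp add: to_mat_def matrix_matrix_mult_def)
  finally show "to_mat (M ** N) $$ (i, j) = (to_mat M * to_mat N) $$ (i, j)" ..
qed (auto simp: to_mat_def)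

lemma to_mat_one: "to_mat (mat 1 :: 'a::comm_semiring_1^'n^'n) = 1\<^sub>m CARD('n)"
  by (rule eq_matI) (auto simp: to_mat_def Finite_Cartesian_Product.mat_def dest: to_idx_from_idx)

lemma to_mat_matpow: "to_mat (matpow (M::'a::comm_semiring_1^'n^'n) k) = to_mat M ^\<^sub>m k"
  by (induction k) (simp_all add: to_mat_one to_mat_mult)

lemma spectrum_to_mat:
  "Spectral_Radius.spectrum (to_mat (C::complex^'n^'n)) = {z. \<exists>v. v \<noteq> 0 \<and> C *v v = z *s v}"
proof (intro Set.set_eqI iffI; clarsimp)
  fix z assume "z \<in> Spectral_Radius.spectrum (to_mat C)"
  then obtain w where "eigenvector (to_mat C) w z"
    by (auto simp: spectrum_def eigenvalue_def)
  then have w: "w \<in> carrier_vec CARD('n)" "w \<noteq> 0\<^sub>v CARD('n)" "to_mat C *\<^sub>v w = z \<cdot>\<^sub>v w"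
    by (auto simp: eigenvector_def)
  then have "to_vec (C *v from_vec w) = to_vec (z *s from_vec w :: complex^'n)"
    by (metis to_mat_mult_vec to_vec_from_vec to_vec_smult)
  then have "C *v from_vec w = z *s from_vec w"
    by (metis from_vec_to_vec)
  moreover have "from_vec w \<noteq> (0::complex^'n)"
    using w to_vec_from_vec to_vec_eq_0_iff by metis
  ultimately show "\<exists>v. v \<noteq> 0 \<and> C *v v = z *s v" by blast
next
  fix z v assume "v \<noteq> 0" "C *v v = z *s v"
  then have "eigenvector (to_mat C) (to_vec v) z"
    by (simp add: eigenvector_def to_mat_mult_vec to_vec_smult to_vec_eq_0_iff)
  then show "z \<in> Spectral_Radius.spectrum (to_mat C)"
    by (auto simp: spectrum_def eigenvalue_def)
qed

lemma eigenvalues_eq_spectrum: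
  "eigenvalues M = Spectral_Radius.spectrum (to_mat (map_matrix complex_of_real M))"
  by (auto simp: spectrum_to_mat eigenvalues_iff)

lemma finite_eigenvalues: "finite (eigenvalues M)"
  unfolding eigenvalues_eq_spectrum by (rule card_finite_spectrum(1)[OF to_mat_carrier])

lemma eigenvalues_nonempty: "eigenvalues (M::real^'n^'n) \<noteq> {}"
  unfolding eigenvalues_eq_spectrum by (rule spectrum_non_empty[OF to_mat_carrier]) simp

lemma spectral_radius_eq_Max: "spectral_radius M = Max (cmod ` eigenvalues M)"
  unfolding spectral_radius_eq_Sup_eigenvalues
  using finite_eigenvalues eigenvalues_nonempty by (intro cSup_eq_Max) auto

lemma spectral_radius_eq_jnf:
  "spectral_radius M = Spectral_Radius.spectral_radius (to_mat (map_matrix complex_of_real M))"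
  by (simp add: spectral_radius_eq_Max Spectral_Radius.spectral_radius_def eigenvalues_eq_spectrum)

lemma norm_eigenvalue_le_spectral_radius:
  "z \<in> eigenvalues M \<Longrightarrow> cmod z \<le> spectral_radius M"
  by (simp add: spectral_radius_eq_Max finite_eigenvalues)

lemma spectral_radius_less_1_iff:
  "spectral_radius M < 1 \<longleftrightarrow> (\<forall>z\<in>eigenvalues M. cmod z < 1)"
  by (simp add: spectral_radius_eq_Max finite_eigenvalues eigenvalues_nonempty)

lemma eigenvalues_scaleR:
  "z \<in> eigenvalues M \<Longrightarrow> complex_of_real c * z \<in> eigenvalues (c *\<^sub>R M)"
proof -
  assume "z \<in> eigenvalues M"
  then obtain v where "v \<noteq> 0" and v: "map_matrix complex_of_real M *v v = z *s v"
    by (auto simp: eigenvalues_iff)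
  have "map_matrix complex_of_real (c *\<^sub>R M) *v v
      = complex_of_real c *s (map_matrix complex_of_real M *v v)"
    by (simp add: map_matrix_def matrix_vector_mult_def Finite_Cartesian_Product.vec_eq_iff
        sum_distrib_left mult.assoc)
  then show ?thesis
    using \<open>v \<noteq> 0\<close> v by (auto simp: eigenvalues_iff)
qed

lemma eigenvalues_matpow:
  "z \<in> eigenvalues M \<Longrightarrow> z ^ k \<in> eigenvalues (matpow M k)"
  by (auto simp: eigenvalues_iff map_matrix_matpow intro: matpow_eigenvector)

lemma spectral_radius_nonneg: "0 \<le> spectral_radius M"
proof -
  obtain z where "z \<in> eigenvalues M"
    using eigenvalues_nonempty by blast
  then show ?thesis
    using norm_eigenvalue_le_spectral_radius norm_ge_zero order_trans by blast
qed

lemma spectral_radius_scaleR_less_1: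
  assumes "0 < r" and "spectral_radius M < r"
  shows "spectral_radius ((1 / r) *\<^sub>R M) < 1"
  unfolding spectral_radius_less_1_iff
proof
  fix z assume "z \<in> eigenvalues ((1 / r) *\<^sub>R M)"
  moreover have "r *\<^sub>R ((1 / r) *\<^sub>R M) = M"
    using assms(1) by simp
  ultimately have "complex_of_real r * z \<in> eigenvalues M"
    using eigenvalues_scaleR by metis
  from norm_eigenvalue_le_spectral_radius[OF this] have "r * cmod z \<le> spectral_radius M"
    using assms(1) by (simp add: norm_mult)
  then show "cmod z < 1"
    using assms mult_less_cancel_left_pos[of r "cmod z" 1] by linarith
qed

lemma matpow_norm_bounded:
  assumes "spectral_radius (M::real^'n^'n) < 1"
  obtains b where "\<And>k. norm (matpow M k) \<le> b"
proof -
  have "Spectral_Radius.spectral_radius (to_mat (map_matrix complex_of_real M)) < 1"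
    using assms by (simp add: spectral_radius_eq_jnf)
  then obtain b where b: "\<And>k. norm_bound (to_mat (map_matrix complex_of_real M) ^\<^sub>m k) b"
    using spectral_radius_jnf_norm_bound_less_1_upper_triangular[OF to_mat_carrier] by blast
  have entry: "\<bar>matpow M k $ i $ j\<bar> \<le> b" for k i j
    using b[of k] unfolding norm_bound_def to_mat_matpow[symmetric] map_matrix_matpow[symmetric]
    by (metis to_mat_dim to_idx_less to_mat_index nth_map_matrix norm_of_real)
  have "norm (matpow M k) \<le> CARD('n) * (CARD('n) * b)" for k
  proof -
    have "norm (matpow M k) \<le> (\<Sum>i\<in>UNIV. \<Sum>j\<in>UNIV. \<bar>matpow M k $ i $ j\<bar>)"
      by (rule norm_matrix_le_sum_abs)
    also have "\<dots> \<le> (\<Sum>i\<in>(UNIV::'n set). \<Sum>j\<in>(UNIV::'n set). b)"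
      by (intro sum_mono entry)
    finally show ?thesis
      by simp
  qed
  then show ?thesis
    using that by blast
qed

lemma matpow_norm_decay:
  assumes "spectral_radius (M::real^'n^'n) < 1"
  obtains c r where "0 < r" "r < 1" "\<And>k. norm (matpow M k) \<le> c * r ^ k"
proof -
  obtain r where "spectral_radius M < r" "r < 1"
    using dense[OF assms] by blast
  then have r: "0 < r" "r < 1" "spectral_radius M < r"
    using spectral_radius_nonneg[of M] by simp_all
  obtain b where b: "\<And>k. norm (matpow ((1 / r) *\<^sub>R M) k) \<le> b"
    using matpow_norm_bounded[OF spectral_radius_scaleR_less_1[OF r(1,3)]] by blast
  have "norm (matpow M k) \<le> b * r ^ k" for k
  proof -
    have "matpow M k = r ^ k *\<^sub>R matpow ((1 / r) *\<^sub>R M) k"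
      using r(1) by (simp add: matpow_scaleR flip: power_mult_distrib)
    then show ?thesis
      using b[of k] r(1) by (simp add: mult.commute mult_left_mono)
  qed
  with that r show ?thesis
    by blast
qed

lemma norm_eigenvalue_le_row_sum:
  assumes "z \<in> eigenvalues (P::real^'n^'n)"
  obtains i where "cmod z \<le> (\<Sum>j\<in>UNIV. \<bar>P $ i $ j\<bar>)"
proof -
  obtain v where "v \<noteq> 0" and v: "map_matrix complex_of_real P *v v = z *s v"
    using assms by (auto simp: eigenvalues_iff)
  have "Max (range (\<lambda>j. cmod (v $ j))) \<in> range (\<lambda>j. cmod (v $ j))"
    by (rule Max_in) auto
  then obtain i where "cmod (v $ i) = Max (range (\<lambda>j. cmod (v $ j)))"
    by (metis rangeE)
  then have i: "cmod (v $ j) \<le> cmod (v $ i)" for j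
    by simp
  have "0 < cmod (v $ i)"
  proof (rule ccontr)
    assume "\<not> 0 < cmod (v $ i)"
    then have "v $ j = 0" for j
      using i[of j] by simp
    with \<open>v \<noteq> 0\<close> show False
      by (simp add: Finite_Cartesian_Product.vec_eq_iff)
  qed
  have "cmod z * cmod (v $ i) = cmod (\<Sum>j\<in>UNIV. complex_of_real (P $ i $ j) * v $ j)"
    using arg_cong[OF v, of "\<lambda>w. cmod (w $ i)"]
    by (simp add: matrix_vector_mult_def norm_mult)
  also have "\<dots> \<le> (\<Sum>j\<in>UNIV. \<bar>P $ i $ j\<bar> * cmod (v $ j))"
    by (rule order_trans[OF norm_sum]) (simp add: norm_mult)
  also have "\<dots> \<le> (\<Sum>j\<in>UNIV. \<bar>P $ i $ j\<bar>) * cmod (v $ i)"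
    unfolding sum_distrib_right by (intro sum_mono mult_left_mono i) simp
  finally have "cmod z \<le> (\<Sum>j\<in>UNIV. \<bar>P $ i $ j\<bar>)"
    using \<open>0 < cmod (v $ i)\<close> by (rule mult_right_le_imp_le)
  then show ?thesis
    by (rule that)
qed

lemma spectral_radius_less_1_iff_row_sum:
  "spectral_radius (M::real^'n^'n) < 1 \<longleftrightarrow> (\<exists>N>0. \<forall>i. (\<Sum>j\<in>UNIV. \<bar>matpow M N $ i $ j\<bar>) < 1)"
proof
  assume "spectral_radius M < 1"
  then obtain c r where r: "0 < r" "r < 1" and decay: "\<And>k. norm (matpow M k) \<le> c * r ^ k"
    using matpow_norm_decay by metis
  have "(\<lambda>k. CARD('n) * (c * r ^ k)) \<longlonglongrightarrow> CARD('n) * (c * 0)"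
    using r by (intro tendsto_intros LIMSEQ_realpow_zero) auto
  then have "eventually (\<lambda>k. CARD('n) * (c * r ^ k) < 1) sequentially"
    by (rule order_tendstoD(2)) simp
  then obtain N0 where N0: "\<And>k. k \<ge> N0 \<Longrightarrow> CARD('n) * (c * r ^ k) < 1"
    by (auto simp: eventually_sequentially)
  have "(\<Sum>j\<in>UNIV. \<bar>matpow M (Suc N0) $ i $ j\<bar>) < 1" for i
  proof -
    have "(\<Sum>j\<in>UNIV. \<bar>matpow M (Suc N0) $ i $ j\<bar>) \<le> CARD('n) * norm (matpow M (Suc N0))"
      by (rule row_sum_abs_le_norm)
    also have "\<dots> \<le> CARD('n) * (c * r ^ Suc N0)"
      by (intro mult_left_mono decay) simp
    also have "\<dots> < 1"
      by (rule N0) simp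
    finally show ?thesis .
  qed
  then show "\<exists>N>0. \<forall>i. (\<Sum>j\<in>UNIV. \<bar>matpow M N $ i $ j\<bar>) < 1"
    by blast
next
  assume "\<exists>N>0. \<forall>i. (\<Sum>j\<in>UNIV. \<bar>matpow M N $ i $ j\<bar>) < 1"
  then obtain N where "N > 0" and small: "\<And>i. (\<Sum>j\<in>UNIV. \<bar>matpow M N $ i $ j\<bar>) < 1"
    by blast
  have "cmod z < 1" if z: "z \<in> eigenvalues M" for z
  proof -
    obtain i where "cmod (z ^ N) \<le> (\<Sum>j\<in>UNIV. \<bar>matpow M N $ i $ j\<bar>)"
      using norm_eigenvalue_le_row_sum[OF eigenvalues_matpow[OF z]] .
    with small[of i] have "cmod z ^ N < 1"
      by (simp add: norm_power)
    then show ?thesis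
      by (rule power_less1_D)
  qed
  then show "spectral_radius M < 1"
    by (simp add: spectral_radius_less_1_iff)
qed

lemma spectral_radius_less_1_if_summable:
  assumes "summable (\<lambda>k. norm (matpow (M::real^'n^'n) k) ^ 2)"
  shows "spectral_radius M < 1"
proof -
  have "(\<lambda>k. norm (matpow M k) ^ 2) \<longlonglongrightarrow> 0"
    using assms by (rule summable_LIMSEQ_zero)
  then have "eventually (\<lambda>k. norm (matpow M k) ^ 2 < (1 / CARD('n)) ^ 2) sequentially"
    by (rule order_tendstoD(2)) simp
  then obtain N0 where N0: "\<And>k. k \<ge> N0 \<Longrightarrow> norm (matpow M k) ^ 2 < (1 / CARD('n)) ^ 2"
    by (auto simp: eventually_sequentially)
  have "(\<Sum>j\<in>UNIV. \<bar>matpow M (Suc N0) $ i $ j\<bar>) < 1" for i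
  proof -
    have "norm (matpow M (Suc N0)) < 1 / CARD('n)"
      using N0[of "Suc N0"] by (auto intro: power2_less_imp_less)
    then show ?thesis
      using row_sum_abs_le_norm[of "matpow M (Suc N0)" i] by (simp add: field_simps)
  qed
  then show ?thesis
    unfolding spectral_radius_less_1_iff_row_sum by blast
qed

lemma spectral_radius_less_1_iff_summable:
  "spectral_radius (M::real^'n^'n) < 1 \<longleftrightarrow> summable (\<lambda>k. norm (matpow M k) ^ 2)"
proof
  assume "spectral_radius M < 1"
  then obtain c r where r: "0 < r" "r < 1" and decay: "\<And>k. norm (matpow M k) \<le> c * r ^ k"
    using matpow_norm_decay by metis
  show "summable (\<lambda>k. norm (matpow M k) ^ 2)"
  proof (rule summable_comparison_test')
    show "summable (\<lambda>k. c ^ 2 * (r ^ 2) ^ k)"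
      using r by (intro summable_mult summable_geometric) (simp add: power_less_one_iff)
    show "norm (norm (matpow M k) ^ 2) \<le> c ^ 2 * (r ^ 2) ^ k" for k
      using power_mono[OF decay[of k] norm_ge_zero, of 2]
      by (simp add: power_mult_distrib flip: power_mult) (simp add: mult.commute)
  qed
qed (rule spectral_radius_less_1_if_summable)

lemma sum_norm_matpow_sq_unbounded:
  assumes "\<not> spectral_radius (M::real^'n^'n) < 1"
  shows "\<exists>N. T < (\<Sum>k<N. norm (matpow M k) ^ 2)"
proof (rule ccontr)
  assume "\<not> (\<exists>N. T < (\<Sum>k<N. norm (matpow M k) ^ 2))"
  then have "summable (\<lambda>k. norm (matpow M k) ^ 2)"
    by (intro summableI_nonneg_bounded[where x = T]) (auto simp: not_less)
  with assms show False
    by (simp add: spectral_radius_less_1_iff_summable)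
qed

lemma open_stab_set: "open (stab_set (A::real^'n^'n) (B::real^'p^'n))"
proof -
  have "stab_set A B = (\<Union>N\<in>{0<..}. \<Inter>i. {K. (\<Sum>j\<in>UNIV. \<bar>matpow (A - B ** K) N $ i $ j\<bar>) < 1})"
    by (auto simp: stab_set_def spectral_radius_less_1_iff_row_sum)
  also have "open \<dots>"
    by (intro open_UN ballI open_INT finite_UNIV open_Collect_less continuous_intros) auto
  finally show ?thesis .
qed

section \<open>The discrete Lyapunov equation\<close>

definition lyapunov_term :: "real^'n^'n \<Rightarrow> real^'n^'n \<Rightarrow> nat \<Rightarrow> real^'n^'n" where
  "lyapunov_term M X k = matpow M k ** X ** transpose (matpow M k)"

lemma lyapunov_term_0 [simp]: "lyapunov_term M X 0 = X"
  by (simp add: lyapunov_term_def)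

lemma lyapunov_term_Suc: "lyapunov_term M X (Suc k) = M ** lyapunov_term M X k ** transpose M"
  by (simp add: lyapunov_term_def matpow_commute matrix_transpose_mul matrix_mul_assoc)

lemma norm_lyapunov_term_le: "norm (lyapunov_term M X k) \<le> norm (matpow M k) ^ 2 * norm X"
proof -
  let ?P = "matpow M k"
  have "norm (lyapunov_term M X k) \<le> norm (?P ** X) * norm (transpose ?P)"
    unfolding lyapunov_term_def by (rule norm_matrix_mult_le)
  also have "\<dots> \<le> norm ?P * norm X * norm ?P"
    by (simp add: norm_transpose mult_right_mono norm_matrix_mult_le)
  finally show ?thesis
    by (simp add: power2_eq_square mult_ac)
qed

context
  fixes M :: "real^'n^'n"
  assumes stable: "spectral_radius M < 1"
begin

lemma summable_lyapunov_term: "summable (lyapunov_term M X)"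
proof (rule summable_comparison_test')
  show "summable (\<lambda>k. norm (matpow M k) ^ 2 * norm X)"
    using stable by (intro summable_mult2) (simp add: spectral_radius_less_1_iff_summable)
qed (rule norm_lyapunov_term_le)

lemma lyapunov_series_fixpoint:
  "suminf (lyapunov_term M X) = X + M ** suminf (lyapunov_term M X) ** transpose M"
proof -
  have "(\<Sum>k. lyapunov_term M X (Suc k)) = M ** suminf (lyapunov_term M X) ** transpose M"
    unfolding lyapunov_term_Suc
    by (rule bounded_linear.suminf[OF bounded_linear_congruence summable_lyapunov_term, symmetric])
  then show ?thesis
    using suminf_split_head[OF summable_lyapunov_term, of X] by (simp add: diff_eq_eq add.commute)
qed

lemma lyapunov_fixpoint_unique:
  assumes "Y = X + M ** Y ** transpose M" and "Z = X + M ** Z ** transpose M"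
  shows "Y = Z"
proof -
  have "Y - Z = (X + M ** Y ** transpose M) - (X + M ** Z ** transpose M)"
    using arg_cong2[OF assms, of "(-)"] .
  also have "\<dots> = M ** (Y - Z) ** transpose M"
    by (simp add: matrix_diff_ldistrib matrix_diff_rdistrib)
  finally have D: "Y - Z = M ** (Y - Z) ** transpose M" .
  have "lyapunov_term M (Y - Z) = (\<lambda>k. Y - Z)"
  proof
    show "lyapunov_term M (Y - Z) k = Y - Z" for k
      by (induction k) (simp_all add: lyapunov_term_Suc flip: D)
  qed
  moreover have "lyapunov_term M (Y - Z) \<longlonglongrightarrow> 0"
    by (rule summable_LIMSEQ_zero[OF summable_lyapunov_term])
  ultimately show ?thesis
    by (simp add: LIMSEQ_const_iff)
qed

lemma the_lyapunov_solution:
  "(THE S. S = X + M ** S ** transpose M) = suminf (lyapunov_term M X)"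
  using lyapunov_series_fixpoint lyapunov_fixpoint_unique by blast

lemma pos_semidef_lyapunov_series:
  assumes "pos_semidef X"
  shows "pos_semidef (suminf (lyapunov_term M X))"
proof -
  have psd: "pos_semidef (lyapunov_term M X k)" for k
    unfolding lyapunov_term_def by (rule pos_semidef_congruence[OF assms])
  have "transpose (suminf (lyapunov_term M X)) = suminf (lyapunov_term M X)"
    using bounded_linear.suminf[OF bounded_linear_transpose summable_lyapunov_term, of X] psd
    by (simp add: pos_semidef_def sym_mat_def)
  moreover have "x \<bullet> (suminf (lyapunov_term M X) *v x) \<ge> 0" for x
    using bounded_linear.suminf[OF bounded_linear_quadratic_form summable_lyapunov_term, of x X]
      bounded_linear.summable[OF bounded_linear_quadratic_form summable_lyapunov_term, of x X] psd
    by (simp add: pos_semidef_def suminf_nonneg)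
  ultimately show ?thesis
    by (simp add: pos_semidef_def sym_mat_def)
qed

lemma trace_lyapunov_series_ge:
  assumes "s \<ge> 0" and X: "\<And>x. s * (x \<bullet> x) \<le> x \<bullet> (X *v x)"
  shows "s * (\<Sum>k<N. norm (matpow M k) ^ 2) \<le> trace (suminf (lyapunov_term M X))"
proof -
  have term_ge: "s * norm (matpow M k) ^ 2 \<le> trace (lyapunov_term M X k)" for k
  proof -
    let ?P = "matpow M k"
    have "s * norm ?P ^ 2 = (\<Sum>i\<in>UNIV. s * (?P $ i \<bullet> ?P $ i))"
      by (simp add: norm_sq_eq_sum_rows power2_norm_eq_inner sum_distrib_left)
    also have "\<dots> \<le> (\<Sum>i\<in>UNIV. ?P $ i \<bullet> (X *v ?P $ i))"
      by (intro sum_mono X)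
    also have "\<dots> = trace (lyapunov_term M X k)"
      by (simp add: lyapunov_term_def trace_congruence)
    finally show ?thesis .
  qed
  have nonneg: "0 \<le> trace (lyapunov_term M X k)" for k
    using term_ge[of k] assms(1) by (meson mult_nonneg_nonneg zero_le_power2 order_trans)
  have summable: "summable (\<lambda>k. trace (lyapunov_term M X k))"
    by (rule bounded_linear.summable[OF bounded_linear_trace summable_lyapunov_term])
  have "s * (\<Sum>k<N. norm (matpow M k) ^ 2) \<le> (\<Sum>k<N. trace (lyapunov_term M X k))"
    unfolding sum_distrib_left by (intro sum_mono term_ge)
  also have "\<dots> \<le> (\<Sum>k. trace (lyapunov_term M X k))"
    by (intro sum_le_suminf[OF summable]) (simp_all add: nonneg)
  also have "\<dots> = trace (suminf (lyapunov_term M X))"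
    by (rule bounded_linear.suminf[OF bounded_linear_trace summable_lyapunov_term, symmetric])
  finally show ?thesis .
qed

end

section \<open>Coercivity of the Lagrangian\<close>

lemma Sigma_K_eq_lyapunov_series:
  "K \<in> stab_set A B \<Longrightarrow>
    Sigma_K A B Sw Ss K = suminf (lyapunov_term (A - B ** K) (Sigma_bar Sw B Ss))"
  unfolding Sigma_K_def by (rule the_lyapunov_solution) (simp add: stab_set_def)

lemma J_cost_lower_bound:
  fixes A :: "real^'n^'n" and B :: "real^'p^'n"
  assumes "pos_def Q" and "pos_semidef R" and "pos_def Sw" and "pos_semidef Ss"
  obtains c where "c > 0" and "\<And>K N. K \<in> stab_set A B \<Longrightarrow>
    c * (\<Sum>k<N. norm (matpow (A - B ** K) k) ^ 2) + trace (R ** Ss) \<le> J_cost A B Q R Sw Ss K"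
proof -
  obtain q where q: "q > 0" "\<And>x. q * (x \<bullet> x) \<le> x \<bullet> (Q *v x)"
    using pos_def_quadratic_lower_bound[OF assms(1)] by blast
  obtain s where s: "s > 0" "\<And>x. s * (x \<bullet> x) \<le> x \<bullet> (Sw *v x)"
    using pos_def_quadratic_lower_bound[OF assms(3)] by blast
  have psd_noise: "pos_semidef (B ** Ss ** transpose B)"
    by (rule pos_semidef_congruence[OF assms(4)])
  have X: "pos_semidef (Sigma_bar Sw B Ss)"
    unfolding Sigma_bar_def by (intro pos_semidef_add pos_def_imp_pos_semidef assms(3) psd_noise)
  have "q * s * (\<Sum>k<N. norm (matpow (A - B ** K) k) ^ 2) + trace (R ** Ss) \<le> J_cost A B Q R Sw Ss K"
    if K: "K \<in> stab_set A B" for K N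
  proof -
    let ?S = "suminf (lyapunov_term (A - B ** K) (Sigma_bar Sw B Ss))"
    have stable: "spectral_radius (A - B ** K) < 1"
      using K by (simp add: stab_set_def)
    have KRK: "pos_semidef (transpose K ** R ** K)"
      using pos_semidef_congruence[OF assms(2), of "transpose K"] by simp
    have W: "pos_semidef (Q + transpose K ** R ** K)"
      by (rule pos_semidef_add[OF pos_def_imp_pos_semidef[OF assms(1)] KRK])
    have "s * (\<Sum>k<N. norm (matpow (A - B ** K) k) ^ 2) \<le> trace ?S"
      using s quadratic_lower_bound_add_pos_semidef[OF s(2) psd_noise]
      by (intro trace_lyapunov_series_ge stable) (simp_all add: Sigma_bar_def)
    also have "q * trace ?S \<le> trace ((Q + transpose K ** R ** K) ** ?S)"
      using W by (intro trace_mult_ge quadratic_lower_bound_add_pos_semidef[OF q(2) KRK]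
          pos_semidef_lyapunov_series[OF stable X]) (simp add: pos_semidef_def sym_mat_def)
    ultimately show ?thesis
      using q(1) by (simp add: J_cost_def Sigma_K_eq_lyapunov_series[OF K] mult.assoc)
         (meson mult_left_mono order_trans less_imp_le)
  qed
  with that[of "q * s"] q s show ?thesis
    by simp
qed

lemma Qfun_nonneg: "0 \<le> Qfun a"
  unfolding Qfun_def by (intro divide_nonneg_pos integral_nonneg mult_nonneg_nonneg) auto

lemma Jc_cost_nonneg: "0 \<le> Jc_cost A B Sw Ss eps q K"
  unfolding Jc_cost_def gauss_expect_def Let_def
  by (intro Bochner_Integration.integral_nonneg mult_nonneg_nonneg prod_nonneg Qfun_nonneg) auto

lemma Lagr_lower_bound:
  fixes A :: "real^'n^'n" and B :: "real^'p^'n"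
  assumes "pos_def Q" and "pos_semidef R" and "pos_def Sw" and "pos_semidef Ss" and "lam \<ge> 0"
  obtains c where "c > 0" and "\<And>K N. K \<in> stab_set A B \<Longrightarrow>
    c * (\<Sum>k<N. norm (matpow (A - B ** K) k) ^ 2) + trace (R ** Ss) - lam * delta
      \<le> Lagr A B Q R Sw Ss eps delta q K lam"
proof -
  obtain c where "c > 0" and J: "\<And>K N. K \<in> stab_set A B \<Longrightarrow>
      c * (\<Sum>k<N. norm (matpow (A - B ** K) k) ^ 2) + trace (R ** Ss) \<le> J_cost A B Q R Sw Ss K"
    using J_cost_lower_bound[OF assms(1-4)] by blast
  have "c * (\<Sum>k<N. norm (matpow (A - B ** K) k) ^ 2) + trace (R ** Ss) - lam * delta
      \<le> Lagr A B Q R Sw Ss eps delta q K lam" if "K \<in> stab_set A B" for K N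
  proof -
    have "0 \<le> lam * Jc_cost A B Sw Ss eps q K"
      using assms(5) by (intro mult_nonneg_nonneg Jc_cost_nonneg)
    then show ?thesis
      using J[OF that, of N] by (simp add: Lagr_def algebra_simps)
  qed
  with \<open>c > 0\<close> that show ?thesis
    by blast
qed

lemma filterlim_at_top_if_unbounded_continuous_minorants:
  fixes f :: "'a::t2_space \<Rightarrow> 'b::linorder_topology"
  assumes "\<And>N. continuous_on UNIV (g N)" and "\<And>T. \<exists>N. T < g N x"
    and "\<And>N y. y \<in> S \<Longrightarrow> g N y \<le> f y"
  shows "filterlim f at_top (at x within S)"
  unfolding filterlim_at_top
proof
  fix T
  obtain N where "T < g N x"
    using assms(2) by blast
  moreover have "continuous (at x within S) (g N)"
    using assms(1) continuous_on_eq_continuous_at continuous_at_imp_continuous_within by blast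
  ultimately have "eventually (\<lambda>y. T < g N y) (at x within S)"
    by (simp add: continuous_within order_tendstoD(1))
  moreover have "eventually (\<lambda>y. y \<in> S) (at x within S)"
    by (simp add: eventually_at_filter)
  ultimately show "eventually (\<lambda>y. T \<le> f y) (at x within S)"
    by eventually_elim (use assms(3) in \<open>meson less_imp_le order_trans\<close>)
qed

theorem lemma1:
  fixes A :: "real^'n^'n" and B :: "real^'p^'n"
    and Q :: "real^'n^'n" and R :: "real^'p^'p"
    and Sw :: "real^'n^'n" and Ss :: "real^'p^'p"
    and eps delta lam :: real and q :: "real^'n"
  assumes "stabilizable A B"
    and "pos_def Q" and "pos_def R"
    and "detectable A (psd_sqrt Q)"
    and "pos_def Sw" and "pos_semidef Ss"
    and "eps > 0" and "delta > 0"
    and "lam > 0"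
  shows "\<forall>K0 \<in> frontier (stab_set A B).
           filterlim (\<lambda>K. Lagr A B Q R Sw Ss eps delta q K lam) at_top
             (at K0 within stab_set A B)"
proof
  fix K0 assume "K0 \<in> frontier (stab_set A B)"
  then have "K0 \<notin> stab_set A B"
    using open_stab_set[of A B] by (simp add: frontier_def interior_open)
  then have unstable: "\<not> spectral_radius (A - B ** K0) < 1"
    by (simp add: stab_set_def)
  obtain c where "c > 0" and L: "\<And>K N. K \<in> stab_set A B \<Longrightarrow>
      c * (\<Sum>k<N. norm (matpow (A - B ** K) k) ^ 2) + trace (R ** Ss) - lam * delta
        \<le> Lagr A B Q R Sw Ss eps delta q K lam"
    using Lagr_lower_bound[OF assms(2) pos_def_imp_pos_semidef[OF assms(3)] assms(5,6)
        less_imp_le[OF assms(9)]] by blast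
  show "filterlim (\<lambda>K. Lagr A B Q R Sw Ss eps delta q K lam) at_top (at K0 within stab_set A B)"
  proof (rule filterlim_at_top_if_unbounded_continuous_minorants[OF _ _ L])
    show "\<exists>N. T < c * (\<Sum>k<N. norm (matpow (A - B ** K0) k) ^ 2) + trace (R ** Ss) - lam * delta"
      for T
      using sum_norm_matpow_sq_unbounded[OF unstable, of "(T - trace (R ** Ss) + lam * delta) / c"]
        \<open>c > 0\<close> by (auto simp: field_simps)
  qed (intro continuous_intros)
qed

end
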